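(* Let $\mathcal{F}=(X,\leq)$ be a poset and $j$ a nucleus on $\mathit{Up}(\mathcal{F})$. Let $I^{\mathcal{F},j}$ be a nuclear interpretation on $(\mathcal{F},j)$ that is consistent with $\vdash_\mathsf{IPC}$. Then $I^{\mathcal{F},j}=I^{\mathcal{F},j}_{\mathrm{st}}$, i.e. for all $j$-fixed upsets $U,V$: $I^{\mathcal{F},j}(\bot)=j\emptyset$, $I^{\mathcal{F},j}(\land)(U,V)=U\cap V$, $I^{\mathcal{F},j}(\lor)(U,V)=j(U\cup V)$, and $I^{\mathcal{F},j}(\to)(U,V)=\{x\in X: {\uparrow}x\cap U\subseteq V\}$.
   Context: The propositional language is generated by $\varphi ::= p \mid \bot \mid \varphi\land\varphi\mid\varphi\lor\varphi\mid\varphi\to\varphi$ with $p$ ranging over a countably infinite set $\mathit{Prop}$ of propositional variables; $\vdash_\mathsf{IPC}$ is the usual single-conclusion consequence relation of intuitionistic propositional logic (premises form a set, possibly empty). For a poset $\mathcal{F}=(X,\leq)$, $\mathit{Up}(\mathcal{F})$ is the set of upward closed subsets of $X$, and ${\uparrow}x=\{y: x\leq y\}$. A nucleus on $\mathit{Up}(\mathcal{F})$ is a map $j:\mathit{Up}(\mathcal{F})\to\mathit{Up}(\mathcal{F})$ with $U\subseteq jU$, $jjU\subseteq jU$, and $j(U\cap V)=jU\cap jV$ for all upsets $U,V$; $U$ is fixed if $jU=U$. A nuclear interpretation $I^{\mathcal{F},j}$ assigns to $\bot$ a fixed upset and to each of $\land,\lor,\to$ a binary function mapping pairs of fixed upsets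 to fixed upsets. A valuation is any map $v:\mathit{Prop}\to\mathit{Up}(\mathcal{F})$; semantic values are defined compositionally by $[\![p]\!]_v=j(v(p))$ and $[\![\#(\varphi_1,\dots,\varphi_n)]\!]_v=I^{\mathcal{F},j}(\#)([\![\varphi_1]\!]_v,\dots,[\![\varphi_n]\!]_v)$ (so all semantic values are fixed upsets). The interpretation is consistent with a consequence relation $\vdash$ if whenever $\Gamma\vdash\varphi$, for every valuation $v$, $\bigcap_{\psi\in\Gamma}[\![\psi]\!]_v\subseteq[\![\varphi]\!]_v$, where $\bigcap\emptyset=X$. The standard nuclear interpretation $I^{\mathcal{F},j}_{\mathrm{st}}$ is the one given by the formulas in the claim. *)

theory Defs
  imports Main
begin

datatype form =
    Var nat
  | Bot
  | And form form
  | Or form form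
  | Imp form form

inductive ipc :: "form set \<Rightarrow> form \<Rightarrow> bool" (infix "\<turnstile>\<^sub>I\<^sub>P\<^sub>C" 50) where
  Ass:   "\<phi> \<in> \<Gamma> \<Longrightarrow> \<Gamma> \<turnstile>\<^sub>I\<^sub>P\<^sub>C \<phi>"
| BotE:  "\<Gamma> \<turnstile>\<^sub>I\<^sub>P\<^sub>C Bot \<Longrightarrow> \<Gamma> \<turnstile>\<^sub>I\<^sub>P\<^sub>C \<phi>"
| AndI:  "\<Gamma> \<turnstile>\<^sub>I\<^sub>P\<^sub>C \<phi> \<Longrightarrow> \<Gamma> \<turnstile>\<^sub>I\<^sub>P\<^sub>C \<psi> \<Longrightarrow> \<Gamma> \<turnstile>\<^sub>I\<^sub>P\<^sub>C And \<phi> \<psi>"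
| AndE1: "\<Gamma> \<turnstile>\<^sub>I\<^sub>P\<^sub>C And \<phi> \<psi> \<Longrightarrow> \<Gamma> \<turnstile>\<^sub>I\<^sub>P\<^sub>C \<phi>"
| AndE2: "\<Gamma> \<turnstile>\<^sub>I\<^sub>P\<^sub>C And \<phi> \<psi> \<Longrightarrow> \<Gamma> \<turnstile>\<^sub>I\<^sub>P\<^sub>C \<psi>"
| OrI1:  "\<Gamma> \<turnstile>\<^sub>I\<^sub>P\<^sub>C \<phi> \<Longrightarrow> \<Gamma> \<turnstile>\<^sub>I\<^sub>P\<^sub>C Or \<phi> \<psi>"
| OrI2:  "\<Gamma> \<turnstile>\<^sub>I\<^sub>P\<^sub>C \<psi> \<Longrightarrow> \<Gamma> \<turnstile>\<^sub>I\<^sub>P\<^sub>C Or \<phi> \<psi>"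
| OrE:   "\<Gamma> \<turnstile>\<^sub>I\<^sub>P\<^sub>C Or \<phi> \<psi> \<Longrightarrow> insert \<phi> \<Gamma> \<turnstile>\<^sub>I\<^sub>P\<^sub>C \<chi> \<Longrightarrow> insert \<psi> \<Gamma> \<turnstile>\<^sub>I\<^sub>P\<^sub>C \<chi>
          \<Longrightarrow> \<Gamma> \<turnstile>\<^sub>I\<^sub>P\<^sub>C \<chi>"
| ImpI:  "insert \<phi> \<Gamma> \<turnstile>\<^sub>I\<^sub>P\<^sub>C \<psi> \<Longrightarrow> \<Gamma> \<turnstile>\<^sub>I\<^sub>P\<^sub>C Imp \<phi> \<psi>"
| ImpE:  "\<Gamma> \<turnstile>\<^sub>I\<^sub>P\<^sub>C Imp \<phi> \<psi> \<Longrightarrow> \<Gamma> \<turnstile>\<^sub>I\<^sub>P\<^sub>C \<phi> \<Longrightarrow> \<Gamma> \<turnstile>\<^sub>I\<^sub>P\<^sub>C \<psi>"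

definition poset :: "'a set \<Rightarrow> ('a \<Rightarrow> 'a \<Rightarrow> bool) \<Rightarrow> bool" where
  "poset X le \<longleftrightarrow>
     (\<forall>x\<in>X. le x x) \<and>
     (\<forall>x\<in>X. \<forall>y\<in>X. \<forall>z\<in>X. le x y \<longrightarrow> le y z \<longrightarrow> le x z) \<and>
     (\<forall>x\<in>X. \<forall>y\<in>X. le x y \<longrightarrow> le y x \<longrightarrow> x = y)"

definition upset :: "'a set \<Rightarrow> ('a \<Rightarrow> 'a \<Rightarrow> bool) \<Rightarrow> 'a set \<Rightarrow> bool" where
  "upset X le U \<longleftrightarrow> U \<subseteq> X \<and> (\<forall>x\<in>U. \<forall>y\<in>X. le x y \<longrightarrow> y \<in> U)"

definition up :: "'a set \<Rightarrow> ('a \<Rightarrow> 'a \<Rightarrow> bool) \<Rightarrow> 'a \<Rightarrow> 'a set" where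
  "up X le x = {y \<in> X. le x y}"

text \<open>A nucleus on Up(F): a map Up(F) -> Up(F) (only its values on upsets matter).\<close>
definition nucleus :: "'a set \<Rightarrow> ('a \<Rightarrow> 'a \<Rightarrow> bool) \<Rightarrow> ('a set \<Rightarrow> 'a set) \<Rightarrow> bool" where
  "nucleus X le j \<longleftrightarrow>
     (\<forall>U. upset X le U \<longrightarrow> upset X le (j U)) \<and>
     (\<forall>U. upset X le U \<longrightarrow> U \<subseteq> j U) \<and>
     (\<forall>U. upset X le U \<longrightarrow> j (j U) \<subseteq> j U) \<and>
     (\<forall>U V. upset X le U \<longrightarrow> upset X le V \<longrightarrow> j (U \<inter> V) = j U \<inter> j V)"

definition fixed_upset :: "'a set \<Rightarrow> ('a \<Rightarrow> 'a \<Rightarrow> bool) \<Rightarrow> ('a set \<Rightarrow> 'a set) \<Rightarrow> 'a set \<Rightarrow> bool" where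
  "fixed_upset X le j U \<longleftrightarrow> upset X le U \<and> j U = U"

definition nuclear_interpretation ::
  "'a set \<Rightarrow> ('a \<Rightarrow> 'a \<Rightarrow> bool) \<Rightarrow> ('a set \<Rightarrow> 'a set) \<Rightarrow>
   'a set \<Rightarrow> ('a set \<Rightarrow> 'a set \<Rightarrow> 'a set) \<Rightarrow> ('a set \<Rightarrow> 'a set \<Rightarrow> 'a set) \<Rightarrow>
   ('a set \<Rightarrow> 'a set \<Rightarrow> 'a set) \<Rightarrow> bool" where
  "nuclear_interpretation X le j ibot iand ior iimp \<longleftrightarrow>
     fixed_upset X le j ibot \<and>
     (\<forall>U V. fixed_upset X le j U \<longrightarrow> fixed_upset X le j V \<longrightarrow>
        fixed_upset X le j (iand U V) \<and> fixed_upset X le j (ior U V) \<and>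
        fixed_upset X le j (iimp U V))"

definition valuation :: "'a set \<Rightarrow> ('a \<Rightarrow> 'a \<Rightarrow> bool) \<Rightarrow> (nat \<Rightarrow> 'a set) \<Rightarrow> bool" where
  "valuation X le v \<longleftrightarrow> (\<forall>p. upset X le (v p))"

primrec sem ::
  "('a set \<Rightarrow> 'a set) \<Rightarrow> 'a set \<Rightarrow> ('a set \<Rightarrow> 'a set \<Rightarrow> 'a set) \<Rightarrow> ('a set \<Rightarrow> 'a set \<Rightarrow> 'a set) \<Rightarrow>
   ('a set \<Rightarrow> 'a set \<Rightarrow> 'a set) \<Rightarrow> (nat \<Rightarrow> 'a set) \<Rightarrow> form \<Rightarrow> 'a set" where
  "sem j ibot iand ior iimp v (Var p) = j (v p)"
| "sem j ibot iand ior iimp v Bot = ibot"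
| "sem j ibot iand ior iimp v (And a b) = iand (sem j ibot iand ior iimp v a) (sem j ibot iand ior iimp v b)"
| "sem j ibot iand ior iimp v (Or a b) = ior (sem j ibot iand ior iimp v a) (sem j ibot iand ior iimp v b)"
| "sem j ibot iand ior iimp v (Imp a b) = iimp (sem j ibot iand ior iimp v a) (sem j ibot iand ior iimp v b)"

text \<open>Consistency with IPC; the intersection over the premises is taken inside X,
  so that the empty intersection is X.\<close>
definition consistent_IPC ::
  "'a set \<Rightarrow> ('a \<Rightarrow> 'a \<Rightarrow> bool) \<Rightarrow> ('a set \<Rightarrow> 'a set) \<Rightarrow>
   'a set \<Rightarrow> ('a set \<Rightarrow> 'a set \<Rightarrow> 'a set) \<Rightarrow> ('a set \<Rightarrow> 'a set \<Rightarrow> 'a set) \<Rightarrow>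
   ('a set \<Rightarrow> 'a set \<Rightarrow> 'a set) \<Rightarrow> bool" where
  "consistent_IPC X le j ibot iand ior iimp \<longleftrightarrow>
     (\<forall>\<Gamma> \<phi>. \<Gamma> \<turnstile>\<^sub>I\<^sub>P\<^sub>C \<phi> \<longrightarrow>
        (\<forall>v. valuation X le v \<longrightarrow>
           X \<inter> (\<Inter>\<psi>\<in>\<Gamma>. sem j ibot iand ior iimp v \<psi>) \<subseteq> sem j ibot iand ior iimp v \<phi>))"

end

theory Submission
  imports Defs
begin

text \<open>Evaluate formulas in variables only, with the variables sent to fixed upsets, so that a
  derivable sequent becomes an inclusion between terms built from the interpreted connectives.
  The sequents \<open>a \<and> b \<turnstile> a\<close>, \<open>a \<and> b \<turnstile> b\<close>, \<open>a, b \<turnstile> a \<and> b\<close> force meet; modus ponens makes the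
  interpreted implication residuate into the Heyting implication, and the sequents
  \<open>c \<turnstile> a \<rightarrow> (a \<and> c)\<close>, \<open>a \<rightarrow> (a \<and> b) \<turnstile> a \<rightarrow> b\<close> give the converse inclusion, because the Heyting
  implication \<open>W\<close> satisfies \<open>A \<inter> W = A \<inter> B\<close>. Disjunction is then caught between
  \<open>a \<turnstile> a \<or> b\<close>, \<open>b \<turnstile> a \<or> b\<close> and \<open>a \<or> b, a \<rightarrow> c, b \<rightarrow> c \<turnstile> c\<close>, and \<open>\<bottom>\<close> by ex falso.\<close>

lemma nucleus_upset: "nucleus X le j \<Longrightarrow> upset X le U \<Longrightarrow> upset X le (j U)"
  and nucleus_inflationary: "nucleus X le j \<Longrightarrow> upset X le U \<Longrightarrow> U \<subseteq> j U"
  and nucleus_Int: "nucleus X le j \<Longrightarrow> upset X le U \<Longrightarrow> upset X le V \<Longrightarrow> j (U \<inter> V) = j U \<inter> j V"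
  by (simp_all add: nucleus_def)

lemma nucleus_idem: "nucleus X le j \<Longrightarrow> upset X le U \<Longrightarrow> j (j U) = j U"
  unfolding nucleus_def by (meson subset_antisym)

lemma nucleus_mono:
  assumes "nucleus X le j" "upset X le U" "upset X le V" "U \<subseteq> V"
  shows "j U \<subseteq> j V"
proof -
  have "j U = j (U \<inter> V)" using \<open>U \<subseteq> V\<close> by (simp add: Int_absorb2)
  also have "\<dots> = j U \<inter> j V" using assms by (simp add: nucleus_Int)
  finally show ?thesis by blast
qed

lemma fixed_upset_nucleus: "nucleus X le j \<Longrightarrow> upset X le U \<Longrightarrow> fixed_upset X le j (j U)"
  by (simp add: fixed_upset_def nucleus_upset nucleus_idem)

lemma upset_empty: "upset X le {}"
  by (simp add: upset_def)

lemma upset_Int: "upset X le U \<Longrightarrow> upset X le V \<Longrightarrow> upset X le (U \<inter> V)"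
  and upset_Un: "upset X le U \<Longrightarrow> upset X le V \<Longrightarrow> upset X le (U \<union> V)"
  by (auto simp: upset_def)

definition heyting_imp :: "'a set \<Rightarrow> ('a \<Rightarrow> 'a \<Rightarrow> bool) \<Rightarrow> 'a set \<Rightarrow> 'a set \<Rightarrow> 'a set" where
  "heyting_imp X le U V = {x \<in> X. up X le x \<inter> U \<subseteq> V}"

lemma upset_heyting_imp:
  assumes "poset X le"
  shows "upset X le (heyting_imp X le U V)"
  unfolding upset_def
proof (intro conjI ballI impI)
  fix x y assume x: "x \<in> heyting_imp X le U V" and y: "y \<in> X" "le x y"
  have "up X le y \<subseteq> up X le x"
    using assms x y unfolding poset_def up_def heyting_imp_def by blast
  then show "y \<in> heyting_imp X le U V"
    using x y unfolding heyting_imp_def by blast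
qed (auto simp: heyting_imp_def)

lemma subset_heyting_imp_iff:
  assumes "poset X le" "upset X le Z"
  shows "Z \<subseteq> heyting_imp X le U V \<longleftrightarrow> Z \<inter> U \<subseteq> V"
proof
  assume "Z \<subseteq> heyting_imp X le U V"
  moreover have "x \<in> up X le x" if "x \<in> Z" for x
    using assms that unfolding poset_def upset_def up_def by blast
  ultimately show "Z \<inter> U \<subseteq> V" unfolding heyting_imp_def by blast
next
  assume "Z \<inter> U \<subseteq> V"
  moreover have "up X le x \<subseteq> Z" if "x \<in> Z" for x
    using assms(2) that unfolding upset_def up_def by blast
  ultimately show "Z \<subseteq> heyting_imp X le U V"
    using assms(2) unfolding heyting_imp_def upset_def by blast
qed

lemma heyting_imp_eq_UNIV:
  assumes "upset X le V" "U \<subseteq> V"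
  shows "heyting_imp X le U V = X"
  using assms unfolding upset_def heyting_imp_def up_def by blast

lemma fixed_upset_heyting_imp:
  assumes "poset X le" "nucleus X le j" "upset X le U" "fixed_upset X le j V"
  shows "fixed_upset X le j (heyting_imp X le U V)"
proof -
  let ?W = "heyting_imp X le U V"
  have W: "upset X le ?W" and V: "upset X le V" "j V = V"
    using assms(1,4) by (simp_all add: upset_heyting_imp fixed_upset_def)
  have "?W \<inter> U \<subseteq> V"
    using subset_heyting_imp_iff[OF assms(1) W, of U V] by simp
  then have "j (?W \<inter> U) \<subseteq> V"
    using nucleus_mono[OF assms(2) upset_Int[OF W assms(3)] V(1)] V(2) by simp
  moreover have "U \<subseteq> j U"
    by (rule nucleus_inflationary[OF assms(2,3)])
  ultimately have "j ?W \<inter> U \<subseteq> V"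
    using nucleus_Int[OF assms(2) W assms(3)] by blast
  then have "j ?W \<subseteq> ?W"
    using subset_heyting_imp_iff[OF assms(1) nucleus_upset[OF assms(2) W]] by simp
  then show ?thesis
    using W nucleus_inflationary[OF assms(2) W] nucleus_upset[OF assms(2) W]
    by (simp add: fixed_upset_def subset_antisym)
qed

lemma ipc_ex_falso: "{Bot} \<turnstile>\<^sub>I\<^sub>P\<^sub>C a"
  by (rule BotE) (simp add: Ass)

lemma ipc_and_left: "{And a b} \<turnstile>\<^sub>I\<^sub>P\<^sub>C a"
  by (rule AndE1[of _ a b]) (simp add: Ass)

lemma ipc_and_right: "{And a b} \<turnstile>\<^sub>I\<^sub>P\<^sub>C b"
  by (rule AndE2[of _ a b]) (simp add: Ass)

lemma ipc_and_intro: "{a, b} \<turnstile>\<^sub>I\<^sub>P\<^sub>C And a b"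
  by (rule AndI) (simp_all add: Ass)

lemma ipc_or_left: "{a} \<turnstile>\<^sub>I\<^sub>P\<^sub>C Or a b"
  by (rule OrI1) (simp add: Ass)

lemma ipc_or_right: "{b} \<turnstile>\<^sub>I\<^sub>P\<^sub>C Or a b"
  by (rule OrI2) (simp add: Ass)

lemma ipc_or_elim: "{Or a b, Imp a c, Imp b c} \<turnstile>\<^sub>I\<^sub>P\<^sub>C c"
proof (rule OrE[of _ a b])
  show "insert a {Or a b, Imp a c, Imp b c} \<turnstile>\<^sub>I\<^sub>P\<^sub>C c"
    by (rule ImpE[of _ a]) (simp_all add: Ass)
  show "insert b {Or a b, Imp a c, Imp b c} \<turnstile>\<^sub>I\<^sub>P\<^sub>C c"
    by (rule ImpE[of _ b]) (simp_all add: Ass)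
qed (simp add: Ass)

lemma ipc_modus_ponens: "{a, Imp a b} \<turnstile>\<^sub>I\<^sub>P\<^sub>C b"
  by (rule ImpE[of _ a b]) (simp_all add: Ass)

lemma ipc_imp_and_self: "{c} \<turnstile>\<^sub>I\<^sub>P\<^sub>C Imp a (And a c)"
  by (rule ImpI, rule AndI) (simp_all add: Ass)

lemma ipc_imp_of_imp_and: "{Imp a (And a b)} \<turnstile>\<^sub>I\<^sub>P\<^sub>C Imp a b"
  by (rule ImpI, rule AndE2[of _ a b], rule ImpE[of _ a]) (simp_all add: Ass)

definition list_valuation :: "'a set list \<Rightarrow> nat \<Rightarrow> 'a set" where
  "list_valuation Us n = (if n < length Us then Us ! n else {})"

lemma valuation_list_valuation:
  "\<forall>U \<in> set Us. upset X le U \<Longrightarrow> valuation X le (list_valuation Us)"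
  by (simp add: valuation_def list_valuation_def upset_empty)

locale ipc_consistent_interpretation =
  fixes X :: "'a set" and le :: "'a \<Rightarrow> 'a \<Rightarrow> bool" and j :: "'a set \<Rightarrow> 'a set"
    and ibot :: "'a set" and iand ior iimp :: "'a set \<Rightarrow> 'a set \<Rightarrow> 'a set"
  assumes poset: "poset X le"
    and nucleus: "nucleus X le j"
    and nuclear: "nuclear_interpretation X le j ibot iand ior iimp"
    and consistent: "consistent_IPC X le j ibot iand ior iimp"
begin

abbreviation fixed :: "'a set \<Rightarrow> bool" where
  "fixed \<equiv> fixed_upset X le j"

abbreviation eval :: "'a set list \<Rightarrow> form \<Rightarrow> 'a set" where
  "eval Us \<equiv> sem j ibot iand ior iimp (list_valuation Us)"

lemma fixed_ibot: "fixed ibot"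
  and fixed_iand: "fixed U \<Longrightarrow> fixed V \<Longrightarrow> fixed (iand U V)"
  and fixed_ior: "fixed U \<Longrightarrow> fixed V \<Longrightarrow> fixed (ior U V)"
  and fixed_iimp: "fixed U \<Longrightarrow> fixed V \<Longrightarrow> fixed (iimp U V)"
  using nuclear by (simp_all add: nuclear_interpretation_def)

lemma fixed_sem: "valuation X le v \<Longrightarrow> fixed (sem j ibot iand ior iimp v \<phi>)"
  by (induction \<phi>)
    (simp_all add: valuation_def fixed_upset_nucleus nucleus fixed_ibot fixed_iand fixed_ior
      fixed_iimp)

lemma j_list_valuation_fixed [simp]: "n < length Us \<Longrightarrow> fixed (Us ! n) \<Longrightarrow> j (list_valuation Us n) = Us ! n"
  by (simp add: list_valuation_def fixed_upset_def)

lemma sequent_sound: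
  assumes "\<Gamma> \<turnstile>\<^sub>I\<^sub>P\<^sub>C \<phi>" "\<Gamma> \<noteq> {}" "\<forall>U \<in> set Us. fixed U"
  shows "(\<Inter>\<psi>\<in>\<Gamma>. eval Us \<psi>) \<subseteq> eval Us \<phi>"
proof -
  have val: "valuation X le (list_valuation Us)"
    using assms(3) by (simp add: valuation_list_valuation fixed_upset_def)
  obtain \<psi> where "\<psi> \<in> \<Gamma>" using assms(2) by blast
  then have "(\<Inter>\<psi>\<in>\<Gamma>. eval Us \<psi>) \<subseteq> eval Us \<psi>" by (rule INT_lower)
  also have "\<dots> \<subseteq> X" using fixed_sem[OF val] by (simp add: fixed_upset_def upset_def)
  finally have "X \<inter> (\<Inter>\<psi>\<in>\<Gamma>. eval Us \<psi>) = (\<Inter>\<psi>\<in>\<Gamma>. eval Us \<psi>)" by (rule Int_absorb1)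
  moreover have "X \<inter> (\<Inter>\<psi>\<in>\<Gamma>. eval Us \<psi>) \<subseteq> eval Us \<phi>"
    using consistent assms(1) val by (simp add: consistent_IPC_def)
  ultimately show ?thesis by simp
qed

lemma ibot_eq: "ibot = j {}"
proof
  have "fixed (j {})" by (simp add: fixed_upset_nucleus nucleus upset_empty)
  then show "ibot \<subseteq> j {}"
    using sequent_sound[OF ipc_ex_falso[of "Var 0"], of "[j {}]"] by simp
  show "j {} \<subseteq> ibot"
    using fixed_ibot nucleus_mono[OF nucleus upset_empty, of ibot] by (simp add: fixed_upset_def)
qed

lemma iand_eq:
  assumes "fixed A" "fixed B"
  shows "iand A B = A \<inter> B"
proof
  show "iand A B \<subseteq> A \<inter> B"
    using sequent_sound[OF ipc_and_left[of "Var 0" "Var 1"], of "[A, B]"]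
      sequent_sound[OF ipc_and_right[of "Var 0" "Var 1"], of "[A, B]"] assms by simp
  show "A \<inter> B \<subseteq> iand A B"
    using sequent_sound[OF ipc_and_intro[of "Var 0" "Var 1"], of "[A, B]"] assms by simp
qed

lemma iimp_eq:
  assumes "fixed A" "fixed B"
  shows "iimp A B = heyting_imp X le A B"
proof
  have "iimp A B \<inter> A \<subseteq> B"
    using sequent_sound[OF ipc_modus_ponens[of "Var 0" "Var 1"], of "[A, B]"] assms by auto
  then show "iimp A B \<subseteq> heyting_imp X le A B"
    using fixed_iimp[OF assms] poset by (simp add: subset_heyting_imp_iff fixed_upset_def)
next
  let ?W = "heyting_imp X le A B"
  have W: "fixed ?W"
    using assms(1) by (intro fixed_upset_heyting_imp[OF poset nucleus _ assms(2)])
      (simp add: fixed_upset_def)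
  have "?W \<inter> A \<subseteq> B"
    using subset_heyting_imp_iff[OF poset upset_heyting_imp[OF poset], of A B A B] by simp
  moreover have "B \<subseteq> ?W"
    using subset_heyting_imp_iff[OF poset, of B A B] assms(2) by (simp add: fixed_upset_def)
  ultimately have "A \<inter> ?W = A \<inter> B" by blast
  then have "iand A ?W = iand A B"
    using W assms by (simp add: iand_eq)
  then have "?W \<subseteq> iimp A (iand A B)"
    using sequent_sound[OF ipc_imp_and_self[of "Var 2" "Var 0"], of "[A, B, ?W]"] assms W by simp
  also have "\<dots> \<subseteq> iimp A B"
    using sequent_sound[OF ipc_imp_of_imp_and[of "Var 0" "Var 1"], of "[A, B]"] assms by simp
  finally show "?W \<subseteq> iimp A B" .
qed

lemma ior_eq:
  assumes "fixed A" "fixed B"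
  shows "ior A B = j (A \<union> B)"
proof
  let ?W = "j (A \<union> B)"
  have AB: "upset X le (A \<union> B)"
    using assms by (simp add: upset_Un fixed_upset_def)
  have W: "fixed ?W"
    using AB by (simp add: fixed_upset_nucleus nucleus)
  have "A \<union> B \<subseteq> ?W"
    using AB by (rule nucleus_inflationary[OF nucleus])
  then have "iimp A ?W = X" "iimp B ?W = X"
    using W unfolding iimp_eq[OF assms(1) W] iimp_eq[OF assms(2) W] fixed_upset_def
    by (simp_all add: heyting_imp_eq_UNIV)
  moreover have "ior A B \<subseteq> X"
    using fixed_ior[OF assms] by (simp add: fixed_upset_def upset_def)
  ultimately show "ior A B \<subseteq> ?W"
    using sequent_sound[OF ipc_or_elim[of "Var 0" "Var 1" "Var 2"], of "[A, B, ?W]"] assms W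
    by auto
next
  have "A \<union> B \<subseteq> ior A B"
    using sequent_sound[OF ipc_or_left[of "Var 0" "Var 1"], of "[A, B]"]
      sequent_sound[OF ipc_or_right[of "Var 1" "Var 0"], of "[A, B]"] assms by simp
  then show "j (A \<union> B) \<subseteq> ior A B"
    using nucleus_mono[OF nucleus] fixed_ior[OF assms] assms
    by (metis fixed_upset_def upset_Un)
qed

end

theorem theorem2:
  fixes X :: "'a set" and le :: "'a \<Rightarrow> 'a \<Rightarrow> bool" and j :: "'a set \<Rightarrow> 'a set"
    and ibot :: "'a set" and iand ior iimp :: "'a set \<Rightarrow> 'a set \<Rightarrow> 'a set"
  assumes "poset X le"
    and "nucleus X le j"
    and "nuclear_interpretation X le j ibot iand ior iimp"
    and "consistent_IPC X le j ibot iand ior iimp"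
  shows "ibot = j {} \<and>
    (\<forall>U V. fixed_upset X le j U \<longrightarrow> fixed_upset X le j V \<longrightarrow>
       iand U V = U \<inter> V \<and>
       ior U V = j (U \<union> V) \<and>
       iimp U V = {x \<in> X. up X le x \<inter> U \<subseteq> V})"
proof -
  interpret ipc_consistent_interpretation X le j ibot iand ior iimp
    using assms by unfold_locales
  show ?thesis
    using ibot_eq iand_eq ior_eq iimp_eq by (simp add: heyting_imp_def)
qed

end
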